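(* Under the hypotheses (torsion-free $G$; $l:G\to\mathbb{Z}^n$ a $\delta$-regular $\delta$-hyperbolic length function with (A) $ht(\delta)=1$, (B) $l(g^m)<l(g)$ for some nonzero integer $m$ implies $ht(l(g)-l(g^m))=1$, (C) $l(g)>0$ for $g\neq1$), for every $k$ with $1\le k<n$ there is a family $\{h_i\mid i\in I\}\subseteq G_{k+1}\setminus G_k$ (not necessarily finite) such that, setting $C_i=G_k\cap h_iG_kh_i^{-1}$, $D_i=G_k\cap h_i^{-1}G_kh_i$ and $\phi_i:C_i\to D_i$, $\phi_i(c)=h_i^{-1}ch_i$, $$G_{k+1}\cong\langle G_k,\{t_i\mid i\in I\}\mid t_i^{-1}ct_i=\phi_i(c),\ c\in C_i,\ i\in I\rangle,$$ via the map that is the identity on $G_k$ and sends $t_i\mapsto h_i$.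
   Context: $\mathbb{Z}^n$ carries the right lexicographic order ($a<b$ iff $a_j<b_j$ for the largest $j$ with $a_j\ne b_j$); $ht(a)$ is the largest index $k$ with $a_k\ne0$, $ht(0)=0$. A length function satisfies $l(1)=0$, $l(g)\ge0$, $l(g^{-1})=l(g)$, $l(gh)\le l(g)+l(h)$; $c(g,h)=\tfrac12(l(g)+l(h)-l(g^{-1}h))$; $\delta$-hyperbolic: $c(f,g)\ge\min\{c(f,h),c(g,h)\}-\delta$ for all $f,g,h$; $\delta$-regular: for all $g,h$ there are $g_c,h_c,g_d,h_d$ with $l(g_c)=l(h_c)=c(g,h)$, $g=g_cg_d$, $h=h_ch_d$, $l(g)=l(g_c)+l(g_d)$, $l(h)=l(h_c)+l(h_d)$, $l(g_c^{-1}h_c)\le4\delta$. $G_k=\{g\in G\mid ht(l(g))\le k\}$. *)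

theory Defs
  imports "HOL-Algebra.Group" "HOL-Library.Function_Algebras"
begin

text \<open>Elements of Z^n are functions nat => int supported in {1..n}.\<close>

definition zvec :: "nat \<Rightarrow> (nat \<Rightarrow> int) set" where
  "zvec n = {a. \<forall>j. a j \<noteq> 0 \<longrightarrow> j \<in> {1..n}}"

definition rlex_less :: "(nat \<Rightarrow> int) \<Rightarrow> (nat \<Rightarrow> int) \<Rightarrow> bool" where
  "rlex_less a b = (\<exists>j. a j < b j \<and> (\<forall>i>j. a i = b i))"

definition rlex_le :: "(nat \<Rightarrow> int) \<Rightarrow> (nat \<Rightarrow> int) \<Rightarrow> bool" where
  "rlex_le a b = (a = b \<or> rlex_less a b)"

definition rlex_min :: "(nat \<Rightarrow> int) \<Rightarrow> (nat \<Rightarrow> int) \<Rightarrow> (nat \<Rightarrow> int)" where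
  "rlex_min a b = (if rlex_le a b then a else b)"

definition ht :: "(nat \<Rightarrow> int) \<Rightarrow> nat" where
  "ht a = (if a = (\<lambda>_. 0) then 0 else (GREATEST k. a k \<noteq> 0))"

text \<open>Twice the Gromov product: c2 g h = 2 c(g,h) = l g + l h - l(g^-1 h).\<close>
definition gprod2 :: "('g, 'b) monoid_scheme \<Rightarrow> ('g \<Rightarrow> nat \<Rightarrow> int) \<Rightarrow> 'g \<Rightarrow> 'g \<Rightarrow> nat \<Rightarrow> int" where
  "gprod2 G l g h = l g + l h - l (inv\<^bsub>G\<^esub> g \<otimes>\<^bsub>G\<^esub> h)"

definition length_function :: "('g, 'b) monoid_scheme \<Rightarrow> nat \<Rightarrow> ('g \<Rightarrow> nat \<Rightarrow> int) \<Rightarrow> bool" where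
  "length_function G n l \<longleftrightarrow>
     (\<forall>g\<in>carrier G. l g \<in> zvec n) \<and>
     l \<one>\<^bsub>G\<^esub> = (\<lambda>_. 0) \<and>
     (\<forall>g\<in>carrier G. rlex_le (\<lambda>_. 0) (l g)) \<and>
     (\<forall>g\<in>carrier G. l (inv\<^bsub>G\<^esub> g) = l g) \<and>
     (\<forall>g\<in>carrier G. \<forall>h\<in>carrier G. rlex_le (l (g \<otimes>\<^bsub>G\<^esub> h)) (l g + l h))"

text \<open>delta-hyperbolicity, multiplied through by 2 (c may be half-integral).\<close>
definition hyperbolic :: "('g, 'b) monoid_scheme \<Rightarrow> ('g \<Rightarrow> nat \<Rightarrow> int) \<Rightarrow> (nat \<Rightarrow> int) \<Rightarrow> bool" where
  "hyperbolic G l \<delta> \<longleftrightarrow>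
     (\<forall>f\<in>carrier G. \<forall>g\<in>carrier G. \<forall>h\<in>carrier G.
        rlex_le (rlex_min (gprod2 G l f h) (gprod2 G l g h) - 2 * \<delta>) (gprod2 G l f g))"

definition regular :: "('g, 'b) monoid_scheme \<Rightarrow> ('g \<Rightarrow> nat \<Rightarrow> int) \<Rightarrow> (nat \<Rightarrow> int) \<Rightarrow> bool" where
  "regular G l \<delta> \<longleftrightarrow>
     (\<forall>g\<in>carrier G. \<forall>h\<in>carrier G. \<exists>gc\<in>carrier G. \<exists>hc\<in>carrier G. \<exists>gd\<in>carrier G. \<exists>hd\<in>carrier G.
        2 * l gc = gprod2 G l g h \<and> l hc = l gc \<and>
        g = gc \<otimes>\<^bsub>G\<^esub> gd \<and> h = hc \<otimes>\<^bsub>G\<^esub> hd \<and>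
        l g = l gc + l gd \<and> l h = l hc + l hd \<and>
        rlex_le (l (inv\<^bsub>G\<^esub> gc \<otimes>\<^bsub>G\<^esub> hc)) (4 * \<delta>))"

definition Gk :: "('g, 'b) monoid_scheme \<Rightarrow> ('g \<Rightarrow> nat \<Rightarrow> int) \<Rightarrow> nat \<Rightarrow> 'g set" where
  "Gk G l k = {g \<in> carrier G. ht (l g) \<le> k}"

definition torsion_free :: "('g, 'b) monoid_scheme \<Rightarrow> bool" where
  "torsion_free G \<longleftrightarrow> (\<forall>g\<in>carrier G. \<forall>m::nat. m > 0 \<and> g [^]\<^bsub>G\<^esub> m = \<one>\<^bsub>G\<^esub> \<longrightarrow> g = \<one>\<^bsub>G\<^esub>)"

text \<open>Words for the presentation < A, t_i (i in I) | t_i^-1 c t_i = phi_i c, c in C_i >: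
  letters are elements of the base group A or stable letters t_i (True) / t_i^-1 (False).\<close>
datatype ('g, 'i) letter = Elem 'g | Stable 'i bool

definition hnn_word :: "'g set \<Rightarrow> 'i set \<Rightarrow> ('g, 'i) letter list \<Rightarrow> bool" where
  "hnn_word A I w \<longleftrightarrow> (\<forall>x\<in>set w. case x of Elem a \<Rightarrow> a \<in> A | Stable i b \<Rightarrow> i \<in> I)"

inductive hnn_cong :: "('g, 'b) monoid_scheme \<Rightarrow> 'g set \<Rightarrow> 'i set \<Rightarrow> ('i \<Rightarrow> 'g set) \<Rightarrow> ('i \<Rightarrow> 'g \<Rightarrow> 'g)
    \<Rightarrow> ('g, 'i) letter list \<Rightarrow> ('g, 'i) letter list \<Rightarrow> bool"
  for G A I C phi where
  refl: "hnn_cong G A I C phi w w"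
| sym: "hnn_cong G A I C phi u v \<Longrightarrow> hnn_cong G A I C phi v u"
| trans: "hnn_cong G A I C phi u v \<Longrightarrow> hnn_cong G A I C phi v w \<Longrightarrow> hnn_cong G A I C phi u w"
| ctx: "hnn_cong G A I C phi u v \<Longrightarrow> hnn_cong G A I C phi (x @ u @ y) (x @ v @ y)"
| mult: "a \<in> A \<Longrightarrow> b \<in> A \<Longrightarrow> hnn_cong G A I C phi [Elem a, Elem b] [Elem (a \<otimes>\<^bsub>G\<^esub> b)]"
| one: "hnn_cong G A I C phi [Elem \<one>\<^bsub>G\<^esub>] []"
| inv1: "i \<in> I \<Longrightarrow> hnn_cong G A I C phi [Stable i True, Stable i False] []"
| inv2: "i \<in> I \<Longrightarrow> hnn_cong G A I C phi [Stable i False, Stable i True] []"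
| rel: "i \<in> I \<Longrightarrow> c \<in> C i \<Longrightarrow> hnn_cong G A I C phi [Stable i False, Elem c, Stable i True] [Elem (phi i c)]"

fun letter_val :: "('g, 'b) monoid_scheme \<Rightarrow> ('i \<Rightarrow> 'g) \<Rightarrow> ('g, 'i) letter \<Rightarrow> 'g" where
  "letter_val G h (Elem a) = a"
| "letter_val G h (Stable i b) = (if b then h i else inv\<^bsub>G\<^esub> (h i))"

definition word_eval :: "('g, 'b) monoid_scheme \<Rightarrow> ('i \<Rightarrow> 'g) \<Rightarrow> ('g, 'i) letter list \<Rightarrow> 'g" where
  "word_eval G h w = foldr (\<lambda>x acc. letter_val G h x \<otimes>\<^bsub>G\<^esub> acc) w \<one>\<^bsub>G\<^esub>"

end

theory Submission
  imports Defs
begin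

text \<open>On \<open>G\<^sub>k\<^sub>+\<^sub>1\<close> only the top coordinate \<open>L g = l(g)\<^sub>k\<^sub>+\<^sub>1\<close> matters: it is an integer-valued
  length function with kernel \<open>G\<^sub>k\<close>; since \<open>\<delta>\<close> has height 1 it is 0-hyperbolic and regular up to
  errors in \<open>G\<^sub>k\<close>, and by (B) no \<open>g\<close> with \<open>L g > 0\<close> has \<open>g\<^sup>2 \<in> G\<^sub>k\<close>.
  Call \<open>g\<close> indecomposable if \<open>L g > 0\<close> and \<open>g\<close> has no splitting \<open>g = x y\<close> with
  \<open>L g = L x + L y\<close> and both summands positive; the \<open>h\<^sub>i\<close> represent the indecomposables up to
  inversion and multiplication by \<open>G\<^sub>k\<close> on both sides. By induction on \<open>L\<close>, \<open>G\<^sub>k\<close> and the \<open>h\<^sub>i\<close>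
  generate \<open>G\<^sub>k\<^sub>+\<^sub>1\<close>. For Britton's lemma, bring a word into a reduced form
  \<open>a\<^sub>0 h\<^sub>i\<^sub>1\<^sup>\<plusminus>\<^sup>1 a\<^sub>1 \<dots>\<close> without pinches: at every junction the Gromov product vanishes (by
  regularity and indecomposability; where two letters coincide, either there is a pinch or
  \<open>(h a)\<^sup>2 \<in> G\<^sub>k\<close>), so by hyperbolicity a nonempty reduced word has positive length.\<close>

lemma (in group) inv_mult_cancel_left [simp]:
  "a \<in> carrier G \<Longrightarrow> y \<in> carrier G \<Longrightarrow> inv a \<otimes> (a \<otimes> y) = y"
  by (simp add: m_assoc [symmetric])

lemma (in group) mult_inv_cancel_left [simp]:
  "a \<in> carrier G \<Longrightarrow> y \<in> carrier G \<Longrightarrow> a \<otimes> (inv a \<otimes> y) = y"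
  by (simp add: m_assoc [symmetric])

section \<open>Words in HNN presentations\<close>

lemma hnn_word_Nil [simp]: "hnn_word A I []"
  by (simp add: hnn_word_def)

lemma hnn_word_Cons [simp]:
  "hnn_word A I (x # w) \<longleftrightarrow> (case x of Elem a \<Rightarrow> a \<in> A | Stable i b \<Rightarrow> i \<in> I) \<and> hnn_word A I w"
  by (simp add: hnn_word_def)

lemma hnn_word_append [simp]: "hnn_word A I (u @ w) \<longleftrightarrow> hnn_word A I u \<and> hnn_word A I w"
  by (auto simp: hnn_word_def)

declare hnn_cong.trans [trans]

lemma hnn_cong_append:
  assumes "hnn_cong G A I C phi u u'" "hnn_cong G A I C phi v v'"
  shows "hnn_cong G A I C phi (u @ v) (u' @ v')"
proof -
  have "hnn_cong G A I C phi ([] @ u @ v) ([] @ u' @ v)"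
    using assms(1) by (rule hnn_cong.ctx)
  moreover have "hnn_cong G A I C phi (u' @ v @ []) (u' @ v' @ [])"
    using assms(2) by (rule hnn_cong.ctx)
  ultimately show ?thesis
    using hnn_cong.trans by fastforce
qed

lemma hnn_cong_Cons:
  assumes "hnn_cong G A I C phi u v" shows "hnn_cong G A I C phi (x # u) (x # v)"
  using hnn_cong_append [OF hnn_cong.refl assms, of "[x]"] by simp

context group
begin

definition signed :: "bool \<Rightarrow> 'a \<Rightarrow> 'a" where
  "signed b x = (if b then x else inv x)"

lemma signed_closed [simp]: "x \<in> carrier G \<Longrightarrow> signed b x \<in> carrier G"
  by (simp add: signed_def)

text \<open>Letters outside the carrier are sent to \<open>\<one>\<close>, so that \<open>word_value\<close> is a monoid
  homomorphism on all words: derivations of \<open>hnn_cong\<close> may pass through such words.\<close>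

definition letter_value :: "('a, 'a) letter \<Rightarrow> 'a" where
  "letter_value x = (case x of
      Elem a \<Rightarrow> if a \<in> carrier G then a else \<one>
    | Stable i b \<Rightarrow> if i \<in> carrier G then signed b i else \<one>)"

fun word_value :: "('a, 'a) letter list \<Rightarrow> 'a" where
  "word_value [] = \<one>"
| "word_value (x # w) = letter_value x \<otimes> word_value w"

lemma letter_value_closed [simp]: "letter_value x \<in> carrier G"
  by (cases x) (auto simp: letter_value_def)

lemma letter_value_Elem [simp]: "a \<in> carrier G \<Longrightarrow> letter_value (Elem a) = a"
  by (simp add: letter_value_def)

lemma letter_value_Stable [simp]: "i \<in> carrier G \<Longrightarrow> letter_value (Stable i b) = signed b i"
  by (simp add: letter_value_def)

lemma word_value_closed [simp]: "word_value w \<in> carrier G"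
  by (induction w) auto

lemma word_value_append: "word_value (u @ v) = word_value u \<otimes> word_value v"
  by (induction u) (auto simp: m_assoc)

lemma word_eval_eq_word_value:
  assumes "hnn_word A I w" "A \<subseteq> carrier G" "I \<subseteq> carrier G"
  shows "word_eval G (\<lambda>x. x) w = word_value w"
  using assms(1)
proof (induction w)
  case Nil
  then show ?case by (simp add: word_eval_def)
next
  case (Cons x w)
  then have "letter_val G (\<lambda>x. x) x = letter_value x"
    using assms(2,3) by (cases x) (auto simp: signed_def)
  with Cons show ?case by (simp add: word_eval_def)
qed

lemma word_value_hnn_cong:
  assumes "hnn_cong G A I C (\<lambda>i c. inv i \<otimes> c \<otimes> i) u v"
    and "A \<subseteq> carrier G" "I \<subseteq> carrier G" "\<And>i. i \<in> I \<Longrightarrow> C i \<subseteq> A"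
  shows "word_value u = word_value v"
  using assms(1)
proof (induction rule: hnn_cong.induct)
  case (ctx u v x y)
  then show ?case by (simp add: word_value_append)
next
  case (mult a b)
  then have "a \<in> carrier G" "b \<in> carrier G" using assms(2) by auto
  then show ?case by simp
next
  case (inv1 i)
  then show ?case using assms(3) by (auto simp: signed_def)
next
  case (inv2 i)
  then show ?case using assms(3) by (auto simp: signed_def)
next
  case (rel i c)
  then have "i \<in> carrier G" "c \<in> carrier G" using assms(2-4) by auto
  then show ?case by (simp add: signed_def m_assoc)
qed auto

fun inv_word :: "('a, 'a) letter list \<Rightarrow> ('a, 'a) letter list" where
  "inv_word [] = []"
| "inv_word (Elem a # w) = inv_word w @ [Elem (inv a)]"
| "inv_word (Stable i b # w) = inv_word w @ [Stable i (\<not> b)]"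

lemma hnn_word_inv_word:
  "subgroup A G \<Longrightarrow> hnn_word A I w \<Longrightarrow> hnn_word A I (inv_word w)"
  by (induction w rule: inv_word.induct) (auto simp: subgroup.m_inv_closed)

lemma word_value_inv_word:
  assumes "hnn_word A I w" "A \<subseteq> carrier G" "I \<subseteq> carrier G"
  shows "word_value (inv_word w) = inv (word_value w)"
  using assms(1)
proof (induction w rule: inv_word.induct)
  case (2 a w)
  then show ?case using assms(2) by (auto simp: word_value_append inv_mult_group)
next
  case (3 i b w)
  then show ?case using assms(3) by (auto simp: word_value_append inv_mult_group signed_def)
qed simp

lemma hnn_cong_inv_word:
  assumes "subgroup A G" "hnn_word A I w"
  shows "hnn_cong G A I C phi (inv_word w @ w) []"
  using assms(2)
proof (induction w rule: inv_word.induct)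
  case 1
  then show ?case by (simp add: hnn_cong.refl)
next
  case (2 a w)
  then have "a \<in> A" "inv a \<in> A" using assms(1) by (auto simp: subgroup.m_inv_closed)
  then have "hnn_cong G A I C phi [Elem (inv a), Elem a] [Elem (inv a \<otimes> a)]"
    by (intro hnn_cong.mult)
  then have "hnn_cong G A I C phi [Elem (inv a), Elem a] [Elem \<one>]"
    using \<open>a \<in> A\<close> assms(1) by (simp add: subgroup.mem_carrier)
  then have "hnn_cong G A I C phi [Elem (inv a), Elem a] []"
    using hnn_cong.one hnn_cong.trans by blast
  then have "hnn_cong G A I C phi (inv_word w @ [Elem (inv a), Elem a] @ w) (inv_word w @ [] @ w)"
    by (rule hnn_cong.ctx)
  then show ?case using 2 hnn_cong.trans by fastforce
next
  case (3 i b w)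
  then have "hnn_cong G A I C phi [Stable i (\<not> b), Stable i b] []"
    using hnn_cong.inv1 hnn_cong.inv2 by (cases b) auto
  then have "hnn_cong G A I C phi (inv_word w @ [Stable i (\<not> b), Stable i b] @ w) (inv_word w @ [] @ w)"
    by (rule hnn_cong.ctx)
  then show ?case using 3 hnn_cong.trans by fastforce
qed

end

section \<open>Integer-valued length functions\<close>

locale integer_length = group G + H: subgroup H G
  for G :: "('g, 'b) monoid_scheme" (structure) and H +
  fixes L :: "'g \<Rightarrow> int"
  assumes L_one: "L \<one> = 0"
    and L_nonneg: "g \<in> H \<Longrightarrow> 0 \<le> L g"
    and L_inv: "g \<in> H \<Longrightarrow> L (inv g) = L g"
    and L_mult_le: "g \<in> H \<Longrightarrow> h \<in> H \<Longrightarrow> L (g \<otimes> h) \<le> L g + L h"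
begin

definition K :: "'g set" where
  "K = {g \<in> H. L g = 0}"

lemma mem_K_iff: "g \<in> K \<longleftrightarrow> g \<in> H \<and> L g = 0"
  by (simp add: K_def)

lemma K_subset_H [simp]: "g \<in> K \<Longrightarrow> g \<in> H"
  by (simp add: mem_K_iff)

lemma K_subgroup: "subgroup K G"
proof
  show "K \<subseteq> carrier G" by (auto simp: mem_K_iff)
  show "\<one> \<in> K" by (simp add: mem_K_iff L_one)
next
  fix x y assume "x \<in> K" "y \<in> K"
  then show "x \<otimes> y \<in> K"
    using L_mult_le [of x y] L_nonneg [of "x \<otimes> y"] by (simp add: mem_K_iff)
next
  fix x assume "x \<in> K"
  then show "inv x \<in> K" by (simp add: mem_K_iff L_inv)
qed

sublocale K: subgroup K G
  by (rule K_subgroup)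

lemma L_mult_K_left:
  assumes "a \<in> K" "g \<in> H" shows "L (a \<otimes> g) = L g"
proof (rule antisym)
  show "L (a \<otimes> g) \<le> L g"
    using L_mult_le [of a g] assms by (simp add: mem_K_iff)
  have "L (inv a \<otimes> (a \<otimes> g)) \<le> L (inv a) + L (a \<otimes> g)"
    using assms by (intro L_mult_le) auto
  then show "L g \<le> L (a \<otimes> g)"
    using assms by (simp add: mem_K_iff L_inv)
qed

lemma L_mult_K_right:
  assumes "a \<in> K" "g \<in> H" shows "L (g \<otimes> a) = L g"
proof -
  have "g \<otimes> a = inv (inv a \<otimes> inv g)"
    using assms by (simp add: inv_mult_group)
  then show ?thesis
    using assms by (simp add: L_inv L_mult_K_left)
qed

text \<open>Twice the Gromov product, so that it is integral.\<close>

definition gromov2 :: "'g \<Rightarrow> 'g \<Rightarrow> int" where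
  "gromov2 x y = L x + L y - L (inv x \<otimes> y)"

lemma gromov2_nonneg: "x \<in> H \<Longrightarrow> y \<in> H \<Longrightarrow> 0 \<le> gromov2 x y"
  using L_mult_le [of "inv x" y] by (simp add: gromov2_def L_inv)

lemma gromov2_le_twice_right:
  assumes "x \<in> H" "y \<in> H" shows "gromov2 x y \<le> 2 * L y"
proof -
  have "L (y \<otimes> inv (inv x \<otimes> y)) \<le> L y + L (inv (inv x \<otimes> y))"
    using assms by (intro L_mult_le) auto
  moreover have "y \<otimes> inv (inv x \<otimes> y) = x"
    using assms by (simp add: inv_mult_group m_assoc)
  ultimately show ?thesis
    using assms by (simp add: gromov2_def L_inv)
qed

lemma gromov2_mult_K_left:
  assumes "a \<in> K" "x \<in> H" "y \<in> H" shows "gromov2 (a \<otimes> x) (a \<otimes> y) = gromov2 x y"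
proof -
  have "inv (a \<otimes> x) \<otimes> (a \<otimes> y) = inv x \<otimes> y"
    using assms by (simp add: inv_mult_group m_assoc)
  then show ?thesis
    using assms by (simp add: gromov2_def L_mult_K_left)
qed

definition indecomposable :: "'g \<Rightarrow> bool" where
  "indecomposable g \<longleftrightarrow> g \<in> H \<and> 0 < L g \<and>
     (\<forall>x\<in>H. \<forall>y\<in>H. g = x \<otimes> y \<and> L g = L x + L y \<longrightarrow> L x = 0 \<or> L y = 0)"

lemma indecomposableD:
  assumes "indecomposable g" "x \<in> H" "y \<in> H" "g = x \<otimes> y" "L g = L x + L y"
  shows "L x = 0 \<or> L y = 0"
  using assms unfolding indecomposable_def by blast

lemma indecomposable_inv:
  assumes "indecomposable g" shows "indecomposable (inv g)"
  unfolding indecomposable_def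
proof (intro conjI ballI impI)
  have g: "g \<in> H" "0 < L g" using assms by (auto simp: indecomposable_def)
  then show "inv g \<in> H" "0 < L (inv g)" by (auto simp: L_inv)
  fix x y assume xy: "x \<in> H" "y \<in> H" "inv g = x \<otimes> y \<and> L (inv g) = L x + L y"
  then have "g = inv (x \<otimes> y)"
    using g by (metis H.mem_carrier inv_inv)
  then have "g = inv y \<otimes> inv x"
    using xy by (simp add: inv_mult_group)
  moreover have "L g = L (inv y) + L (inv x)"
    using xy g by (simp add: L_inv)
  ultimately have "L (inv y) = 0 \<or> L (inv x) = 0"
    using assms xy unfolding indecomposable_def by blast
  then show "L x = 0 \<or> L y = 0" using xy by (auto simp: L_inv)
qed

lemma indecomposable_mult_K_left:
  assumes "a \<in> K" "indecomposable g" shows "indecomposable (a \<otimes> g)"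
  unfolding indecomposable_def
proof (intro conjI ballI impI)
  have g: "g \<in> H" "0 < L g" using assms by (auto simp: indecomposable_def)
  then show "a \<otimes> g \<in> H" "0 < L (a \<otimes> g)" using assms by (auto simp: L_mult_K_left)
  fix x y assume xy: "x \<in> H" "y \<in> H" "a \<otimes> g = x \<otimes> y \<and> L (a \<otimes> g) = L x + L y"
  have "g = inv a \<otimes> (a \<otimes> g)" using assms g by simp
  then have "g = (inv a \<otimes> x) \<otimes> y" "L g = L (inv a \<otimes> x) + L y"
    using assms xy g by (auto simp: m_assoc L_mult_K_left)
  then have "L (inv a \<otimes> x) = 0 \<or> L y = 0"
    using assms xy by (auto simp: indecomposable_def)
  then show "L x = 0 \<or> L y = 0" using assms xy by (auto simp: L_mult_K_left)
qed

definition double_coset_rel :: "('g \<times> 'g) set" where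
  "double_coset_rel = {(g, g'). g \<in> carrier G \<and>
     (\<exists>a\<in>K. \<exists>b\<in>K. g' = a \<otimes> g \<otimes> b \<or> g' = a \<otimes> inv g \<otimes> b)}"

lemma double_coset_relI:
  assumes "g \<in> carrier G" "a \<in> K" "b \<in> K"
  shows "(g, a \<otimes> g \<otimes> b) \<in> double_coset_rel" "(g, a \<otimes> inv g \<otimes> b) \<in> double_coset_rel"
  using assms by (auto simp: double_coset_rel_def)

lemma double_coset_relE:
  assumes "(g, g') \<in> double_coset_rel"
  obtains a b where "g \<in> carrier G" "a \<in> K" "b \<in> K" "g' = a \<otimes> g \<otimes> b"
    | a b where "g \<in> carrier G" "a \<in> K" "b \<in> K" "g' = a \<otimes> inv g \<otimes> b"
  using assms by (auto simp: double_coset_rel_def)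

lemma double_coset_rel_sym: "sym double_coset_rel"
proof (rule symI)
  fix g g' assume "(g, g') \<in> double_coset_rel"
  then show "(g', g) \<in> double_coset_rel"
  proof (cases rule: double_coset_relE)
    case (1 a b)
    then have "g = inv a \<otimes> g' \<otimes> inv b" by (simp add: m_assoc)
    then show ?thesis using 1 double_coset_relI(1) [of g' "inv a" "inv b"] by simp
  next
    case (2 a b)
    then have "g = b \<otimes> inv g' \<otimes> a" by (simp add: m_assoc inv_mult_group)
    then show ?thesis using 2 double_coset_relI(2) [of g' b a] by simp
  qed
qed

lemma double_coset_rel_trans: "trans double_coset_rel"
proof (rule transI)
  fix g g' g'' assume g': "(g, g') \<in> double_coset_rel" and g'': "(g', g'') \<in> double_coset_rel"
  from g'' show "(g, g'') \<in> double_coset_rel"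
  proof (cases rule: double_coset_relE)
    case (1 c d)
    from g' show ?thesis
    proof (cases rule: double_coset_relE)
      case (1 a b)
      then have "g'' = (c \<otimes> a) \<otimes> g \<otimes> (b \<otimes> d)" using \<open>g'' = c \<otimes> g' \<otimes> d\<close> \<open>c \<in> K\<close> \<open>d \<in> K\<close>
        by (simp add: m_assoc)
      then show ?thesis using 1 \<open>c \<in> K\<close> \<open>d \<in> K\<close> double_coset_relI(1) by simp
    next
      case (2 a b)
      then have "g'' = (c \<otimes> a) \<otimes> inv g \<otimes> (b \<otimes> d)" using \<open>g'' = c \<otimes> g' \<otimes> d\<close> \<open>c \<in> K\<close> \<open>d \<in> K\<close>
        by (simp add: m_assoc)
      then show ?thesis using 2 \<open>c \<in> K\<close> \<open>d \<in> K\<close> double_coset_relI(2) by simp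
    qed
  next
    case (2 c d)
    from g' show ?thesis
    proof (cases rule: double_coset_relE)
      case (1 a b)
      then have "g'' = (c \<otimes> inv b) \<otimes> inv g \<otimes> (inv a \<otimes> d)"
        using \<open>g'' = c \<otimes> inv g' \<otimes> d\<close> \<open>c \<in> K\<close> \<open>d \<in> K\<close> by (simp add: m_assoc inv_mult_group)
      then show ?thesis using 1 \<open>c \<in> K\<close> \<open>d \<in> K\<close> double_coset_relI(2) by simp
    next
      case (2 a b)
      then have "g'' = (c \<otimes> inv b) \<otimes> g \<otimes> (inv a \<otimes> d)"
        using \<open>g'' = c \<otimes> inv g' \<otimes> d\<close> \<open>c \<in> K\<close> \<open>d \<in> K\<close> by (simp add: m_assoc inv_mult_group)
      then show ?thesis using 2 \<open>c \<in> K\<close> \<open>d \<in> K\<close> double_coset_relI(1) by simp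
    qed
  qed
qed

lemma equiv_double_coset_rel: "equiv (carrier G) double_coset_rel"
proof (rule equivI)
  show "double_coset_rel \<subseteq> carrier G \<times> carrier G"
    by (auto simp: double_coset_rel_def)
  show "refl_on (carrier G) double_coset_rel"
    using double_coset_relI(1) [of _ \<one> \<one>] by (auto intro!: refl_onI simp: double_coset_rel_def)
qed (fact double_coset_rel_sym double_coset_rel_trans)+

lemma signed_double_coset_rel: "x \<in> carrier G \<Longrightarrow> (x, signed b x) \<in> double_coset_rel"
  using double_coset_relI [of x \<one> \<one>] by (simp add: signed_def)

lemma indecomposable_mult_K_right:
  assumes "a \<in> K" "indecomposable g" shows "indecomposable (g \<otimes> a)"
proof -
  have "g \<in> H" using assms(2) by (simp add: indecomposable_def)
  then have "g \<otimes> a = inv (inv a \<otimes> inv g)" using assms(1) by (simp add: inv_mult_group)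
  then show ?thesis
    using assms by (simp add: indecomposable_inv indecomposable_mult_K_left)
qed

lemma indecomposable_double_coset_rel:
  assumes "(g, g') \<in> double_coset_rel" "indecomposable g" shows "indecomposable g'"
  using assms(1)
proof (cases rule: double_coset_relE)
  case (1 a b)
  then show ?thesis using assms(2) by (simp add: indecomposable_mult_K_left indecomposable_mult_K_right)
next
  case (2 a b)
  then show ?thesis
    using assms(2) by (simp add: indecomposable_inv indecomposable_mult_K_left indecomposable_mult_K_right)
qed

definition reps :: "'g set" where
  "reps = (\<lambda>X. SOME x. x \<in> X) ` ({g. indecomposable g} // double_coset_rel)"

lemma some_in_double_coset:
  assumes "indecomposable g"
  shows "(SOME x. x \<in> double_coset_rel `` {g}) \<in> double_coset_rel `` {g}"
proof (rule someI)
  show "g \<in> double_coset_rel `` {g}"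
    using assms equiv_class_self [OF equiv_double_coset_rel] by (simp add: indecomposable_def)
qed

lemma reps_indecomposable: "i \<in> reps \<Longrightarrow> indecomposable i"
  unfolding reps_def quotient_def
  using some_in_double_coset indecomposable_double_coset_rel by blast

lemma reps_cover: "indecomposable g \<Longrightarrow> \<exists>i\<in>reps. (i, g) \<in> double_coset_rel"
  unfolding reps_def quotient_def
  using some_in_double_coset double_coset_rel_sym by (blast elim: symE)

lemma reps_unique:
  assumes "i \<in> reps" "j \<in> reps" "(i, j) \<in> double_coset_rel" shows "i = j"
proof -
  obtain g g' where
    i: "indecomposable g" "i = (SOME x. x \<in> double_coset_rel `` {g})" and
    j: "indecomposable g'" "j = (SOME x. x \<in> double_coset_rel `` {g'})"
    using assms(1,2) by (auto simp: reps_def quotient_def)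
  have "(g, i) \<in> double_coset_rel" "(g', j) \<in> double_coset_rel"
    using i j some_in_double_coset by auto
  with assms(3) have "(g, g') \<in> double_coset_rel"
    using double_coset_rel_sym double_coset_rel_trans by (blast elim: symE transE)
  then have "double_coset_rel `` {g} = double_coset_rel `` {g'}"
    by (rule equiv_class_eq [OF equiv_double_coset_rel])
  then show ?thesis using i j by simp
qed

lemma reps_in_H [simp]: "i \<in> reps \<Longrightarrow> i \<in> H"
  using reps_indecomposable by (simp add: indecomposable_def)

lemma reps_subset_carrier: "reps \<subseteq> carrier G"
  by auto

lemma indecomposable_signed: "i \<in> reps \<Longrightarrow> indecomposable (signed b i)"
  using reps_indecomposable indecomposable_inv by (simp add: signed_def)

lemma signed_in_H [simp]: "i \<in> reps \<Longrightarrow> signed b i \<in> H"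
  using indecomposable_signed by (simp add: indecomposable_def)

abbreviation Cs :: "'g \<Rightarrow> 'g set" where
  "Cs i \<equiv> K \<inter> {i \<otimes> x \<otimes> inv i | x. x \<in> K}"

abbreviation Ds :: "'g \<Rightarrow> 'g set" where
  "Ds i \<equiv> K \<inter> {inv i \<otimes> x \<otimes> i | x. x \<in> K}"

abbreviation word_cong :: "('g, 'g) letter list \<Rightarrow> ('g, 'g) letter list \<Rightarrow> bool" where
  "word_cong \<equiv> hnn_cong G K reps Cs (\<lambda>i c. inv i \<otimes> c \<otimes> i)"

lemma word_value_word_cong: "word_cong u v \<Longrightarrow> word_value u = word_value v"
  by (rule word_value_hnn_cong) (auto simp: reps_subset_carrier)

text \<open>A triple \<open>(i, b, a)\<close> encodes the subword \<open>t\<^sub>i\<^sup>\<plusminus>\<^sup>1 a\<close>; \<open>pinch x y\<close> says that the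
  subword \<open>t\<^sub>j\<^sup>\<plusminus>\<^sup>1 a t\<^sub>i\<^sup>\<plusminus>\<^sup>1\<close> where they meet can be shortened by an HNN relation.\<close>

fun pinch :: "'g \<times> bool \<times> 'g \<Rightarrow> 'g \<times> bool \<times> 'g \<Rightarrow> bool" where
  "pinch (j, b', a) (i, b, c) \<longleftrightarrow> i = j \<and> b' \<noteq> b \<and> a \<in> (if b' then Ds i else Cs i)"

fun admissible :: "'g \<times> bool \<times> 'g \<Rightarrow> bool" where
  "admissible (i, b, a) \<longleftrightarrow> i \<in> reps \<and> a \<in> K"

fun reduced :: "('g \<times> bool \<times> 'g) list \<Rightarrow> bool" where
  "reduced [] = True"
| "reduced [x] = admissible x"
| "reduced (x # y # ps) \<longleftrightarrow> admissible x \<and> \<not> pinch x y \<and> reduced (y # ps)"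

fun stable_word :: "('g \<times> bool \<times> 'g) list \<Rightarrow> ('g, 'g) letter list" where
  "stable_word [] = []"
| "stable_word ((i, b, a) # ps) = Stable i b # Elem a # stable_word ps"

lemma reduced_tl: "reduced (x # ps) \<Longrightarrow> reduced ps"
  by (cases ps) auto

lemma reduced_hd: "reduced (x # ps) \<Longrightarrow> admissible x"
  by (cases ps) auto

lemma word_cong_rel:
  "i \<in> reps \<Longrightarrow> c \<in> Cs i \<Longrightarrow> word_cong [Stable i False, Elem c, Stable i True] [Elem (inv i \<otimes> c \<otimes> i)]"
  by (rule hnn_cong.rel)

lemma pinch_word_cong:
  assumes i: "i \<in> reps" and a: "a \<in> (if b then Ds i else Cs i)"
  shows "\<exists>e\<in>K. word_cong [Stable i b, Elem a, Stable i (\<not> b)] [Elem e]"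
proof (cases b)
  case False
  then have "a \<in> Cs i" using a by simp
  then have "word_cong [Stable i False, Elem a, Stable i True] [Elem (inv i \<otimes> a \<otimes> i)]"
    using i by (rule word_cong_rel [rotated])
  moreover have "inv i \<otimes> a \<otimes> i \<in> K"
    using \<open>a \<in> Cs i\<close> i by (auto simp: m_assoc)
  ultimately show ?thesis using False by auto
next
  case True
  then obtain x where x: "x \<in> K" "a = inv i \<otimes> x \<otimes> i" using a by auto
  then have "x = i \<otimes> a \<otimes> inv i" "inv i \<otimes> x \<otimes> i = a"
    using i by (simp_all add: m_assoc)
  moreover have "a \<in> K" using a True by simp
  ultimately have "x \<in> Cs i" "inv i \<otimes> x \<otimes> i = a"
    using x(1) by blast+
  then have rel: "word_cong [Elem a] [Stable i False, Elem x, Stable i True]"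
    using word_cong_rel [OF i, of x] by (simp add: hnn_cong.sym)
  have "word_cong [Stable i True, Elem a, Stable i False]
      [Stable i True, Stable i False, Elem x, Stable i True, Stable i False]"
    using hnn_cong.ctx [OF rel, where x = "[Stable i True]" and y = "[Stable i False]"] by simp
  also have "word_cong \<dots> ([] @ [Elem x] @ [])"
    using hnn_cong_append [OF hnn_cong.inv1 [OF i]
        hnn_cong_append [OF hnn_cong.refl [of _ _ _ _ _ "[Elem x]"] hnn_cong.inv1 [OF i]]] by simp
  finally show ?thesis using True x by auto
qed

lemma normal_form_Stable:
  assumes "i \<in> reps" "a0 \<in> K" "reduced ps"
  shows "\<exists>a0' ps'. a0' \<in> K \<and> reduced ps' \<and>
    word_cong (Stable i b # Elem a0 # stable_word ps) (Elem a0' # stable_word ps')"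
proof (cases "ps \<noteq> [] \<and> pinch (i, b, a0) (hd ps)")
  case True
  then obtain y ps' where "ps = y # ps'" by (cases ps) auto
  moreover obtain i' b' a1 where "y = (i', b', a1)" by (cases y)
  ultimately have ps: "ps = (i, \<not> b, a1) # ps'" and a0: "a0 \<in> (if b then Ds i else Cs i)"
    using True by auto
  obtain e where e: "e \<in> K" "word_cong [Stable i b, Elem a0, Stable i (\<not> b)] [Elem e]"
    using pinch_word_cong [OF assms(1) a0] by blast
  have a1: "a1 \<in> K" "reduced ps'"
    using reduced_hd [of "(i, \<not> b, a1)" ps'] reduced_tl [of "(i, \<not> b, a1)" ps'] assms(3) ps
    by simp_all
  have "word_cong (Stable i b # Elem a0 # stable_word ps)
      ([Stable i b, Elem a0, Stable i (\<not> b)] @ Elem a1 # stable_word ps')"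
    using ps by (simp add: hnn_cong.refl)
  also have "word_cong \<dots> ([Elem e] @ Elem a1 # stable_word ps')"
    using e(2) by (rule hnn_cong_append [OF _ hnn_cong.refl])
  also have "word_cong \<dots> ([Elem (e \<otimes> a1)] @ stable_word ps')"
    using hnn_cong_append [OF hnn_cong.mult [OF e(1) a1(1)] hnn_cong.refl] by simp
  finally have "word_cong (Stable i b # Elem a0 # stable_word ps) (Elem (e \<otimes> a1) # stable_word ps')"
    by simp
  moreover have "e \<otimes> a1 \<in> K" using e(1) a1(1) by simp
  ultimately show ?thesis using a1(2) by blast
next
  case False
  with assms have "reduced ((i, b, a0) # ps)"
    by (cases ps) auto
  moreover have "word_cong (Stable i b # Elem a0 # stable_word ps)
      (Elem \<one> # stable_word ((i, b, a0) # ps))"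
    using hnn_cong_append [OF hnn_cong.sym [OF hnn_cong.one] hnn_cong.refl] by simp
  ultimately show ?thesis using K.one_closed by blast
qed

lemma normal_form:
  "hnn_word K reps w \<Longrightarrow> \<exists>a0 ps. a0 \<in> K \<and> reduced ps \<and> word_cong w (Elem a0 # stable_word ps)"
proof (induction w)
  case Nil
  have "word_cong [] (Elem \<one> # stable_word [])"
    by (simp add: hnn_cong.sym [OF hnn_cong.one])
  then show ?case using K.one_closed reduced.simps(1) by blast
next
  case (Cons x w)
  then obtain a0 ps where IH: "a0 \<in> K" "reduced ps" "word_cong w (Elem a0 # stable_word ps)"
    by auto
  have cong_x: "word_cong (x # w) (x # Elem a0 # stable_word ps)"
    using IH(3) by (rule hnn_cong_Cons)
  show ?case
  proof (cases x)
    case (Elem a)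
    then have "a \<in> K" using Cons.prems by simp
    note cong_x
    also have "word_cong (x # Elem a0 # stable_word ps) ([Elem a, Elem a0] @ stable_word ps)"
      using Elem by (simp add: hnn_cong.refl)
    also have "word_cong \<dots> ([Elem (a \<otimes> a0)] @ stable_word ps)"
      using \<open>a \<in> K\<close> IH(1) by (rule hnn_cong_append [OF hnn_cong.mult hnn_cong.refl])
    finally have "word_cong (x # w) (Elem (a \<otimes> a0) # stable_word ps)"
      by simp
    moreover have "a \<otimes> a0 \<in> K" using \<open>a \<in> K\<close> IH(1) by simp
    ultimately show ?thesis using IH(2) by blast
  next
    case (Stable i b)
    then have "i \<in> reps" using Cons.prems by simp
    then obtain a0' ps' where "a0' \<in> K" "reduced ps'"
      "word_cong (x # Elem a0 # stable_word ps) (Elem a0' # stable_word ps')"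
      using normal_form_Stable [OF _ IH(1,2)] Stable by blast
    then show ?thesis
      using hnn_cong.trans [OF cong_x] by blast
  qed
qed

lemma word_value_in_H: "hnn_word K reps w \<Longrightarrow> word_value w \<in> H"
proof (induction w)
  case (Cons x w)
  then have "letter_value x \<in> H" by (cases x) auto
  with Cons show ?case by simp
qed simp

lemma indecomposable_word_value:
  assumes "indecomposable g" shows "\<exists>w. hnn_word K reps w \<and> word_value w = g"
proof -
  obtain i where i: "i \<in> reps" "(i, g) \<in> double_coset_rel"
    using reps_cover [OF assms] by blast
  from i(2) obtain a b c where "a \<in> K" "b \<in> K" "g = a \<otimes> signed c i \<otimes> b"
  proof (cases rule: double_coset_relE)
    case (1 a b)
    then show ?thesis using that [of a b True] by (simp add: signed_def)
  next
    case (2 a b)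
    then show ?thesis using that [of a b False] by (simp add: signed_def)
  qed
  then have "hnn_word K reps [Elem a, Stable i c, Elem b]"
    "word_value [Elem a, Stable i c, Elem b] = g"
    using i(1) by (simp_all add: m_assoc)
  then show ?thesis by blast
qed

lemma word_value_surj: "g \<in> H \<Longrightarrow> \<exists>w. hnn_word K reps w \<and> word_value w = g"
proof (induction "nat (L g)" arbitrary: g rule: less_induct)
  case less
  show ?case
  proof (cases "L g = 0")
    case True
    then have "g \<in> K" using less.prems by (simp add: mem_K_iff)
    then have "hnn_word K reps [Elem g] \<and> word_value [Elem g] = g" by simp
    then show ?thesis by blast
  next
    case False
    show ?thesis
    proof (cases "indecomposable g")
      case True
      then show ?thesis by (rule indecomposable_word_value)
    next
      case not_indecomposable: False
      have "0 < L g" using False L_nonneg [OF less.prems] by simp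
      then obtain x y where xy: "x \<in> H" "y \<in> H" "g = x \<otimes> y" "L g = L x + L y"
          "L x \<noteq> 0" "L y \<noteq> 0"
        using less.prems not_indecomposable unfolding indecomposable_def by blast
      then have "nat (L x) < nat (L g)" "nat (L y) < nat (L g)"
        using L_nonneg [OF xy(1)] L_nonneg [OF xy(2)] by linarith+
      then obtain u v where "hnn_word K reps u" "word_value u = x" "hnn_word K reps v" "word_value v = y"
        using less.hyps xy(1,2) by blast
      then have "hnn_word K reps (u @ v) \<and> word_value (u @ v) = g"
        using xy(3) by (simp add: word_value_append)
      then show ?thesis by blast
    qed
  qed
qed

end

section \<open>Regular tree length functions and Britton's lemma\<close>

locale regular_tree_length = integer_length +
  assumes gromov2_hyperbolic:
      "\<lbrakk>f \<in> H; g \<in> H; h \<in> H\<rbrakk> \<Longrightarrow> min (gromov2 f h) (gromov2 g h) \<le> gromov2 f g"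
    and regular_split: "\<lbrakk>g \<in> H; h \<in> H\<rbrakk> \<Longrightarrow> \<exists>gc gd hc hd.
      gc \<in> H \<and> gd \<in> H \<and> hc \<in> H \<and> hd \<in> H \<and> g = gc \<otimes> gd \<and> h = hc \<otimes> hd \<and>
      L g = L gc + L gd \<and> L h = L hc + L hd \<and> 2 * L gc = gromov2 g h \<and> L hc = L gc \<and>
      inv gc \<otimes> hc \<in> K"
    and square_notin_K: "\<lbrakk>g \<in> H; 0 < L g\<rbrakk> \<Longrightarrow> g \<otimes> g \<notin> K"
begin

lemma mem_K_if_gromov2_pos:
  assumes x: "indecomposable x" and y: "indecomposable y" and pos: "0 < gromov2 x y"
  shows "inv x \<otimes> y \<in> K"
proof -
  have "x \<in> H" "y \<in> H" using x y by (auto simp: indecomposable_def)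
  from regular_split [OF this] obtain gc gd hc hd where split: "gc \<in> H" "gd \<in> H" "hc \<in> H" "hd \<in> H"
    "x = gc \<otimes> gd" "y = hc \<otimes> hd" "L x = L gc + L gd" "L y = L hc + L hd"
    "2 * L gc = gromov2 x y" "L hc = L gc" "inv gc \<otimes> hc \<in> K"
    by blast
  have "L gc = 0 \<or> L gd = 0" "L hc = 0 \<or> L hd = 0"
    using indecomposableD [OF x split(1,2,5,7)] indecomposableD [OF y split(3,4,6,8)] by simp_all
  moreover have "0 < L gc" "0 < L hc"
    using pos split(9,10) by simp_all
  ultimately have "gd \<in> K" "hd \<in> K"
    using split(2,4) by (simp_all add: mem_K_iff)
  moreover have "inv x \<otimes> y = inv gd \<otimes> (inv gc \<otimes> hc) \<otimes> hd"
    using split(1-6) by (simp add: m_assoc inv_mult_group)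
  ultimately show ?thesis using split(11) by simp
qed

text \<open>If \<open>s a s' \<in> K\<close> for stable letters \<open>s, s'\<close> and \<open>a \<in> K\<close>, then \<open>s, s'\<close> come from the same
  representative; equal signs would give \<open>(s a)\<^sup>2 \<in> K\<close>, so the signs differ and there is a pinch.\<close>

lemma pinch_if_mem_K:
  assumes i: "i \<in> reps" and j: "j \<in> reps" and a: "a \<in> K"
    and "signed b' j \<otimes> a \<otimes> signed b i \<in> K"
  shows "pinch (j, b', a) (i, b, c)"
proof -
  define z where "z = signed b' j \<otimes> a \<otimes> signed b i"
  have carrier: "i \<in> carrier G" "j \<in> carrier G" "a \<in> carrier G" and "z \<in> K"
    using assms by (auto simp: z_def)
  have "(j, signed b' j) \<in> double_coset_rel"
    using carrier(2) by (rule signed_double_coset_rel)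
  moreover have "(signed b' j, inv (signed b' j)) \<in> double_coset_rel"
    using signed_double_coset_rel [of "signed b' j" False] carrier by (simp add: signed_def)
  moreover have "signed b i = inv a \<otimes> inv (signed b' j) \<otimes> z"
    using carrier by (simp add: z_def m_assoc)
  then have "(inv (signed b' j), signed b i) \<in> double_coset_rel"
    using double_coset_relI(1) [of "inv (signed b' j)" "inv a" z] carrier a \<open>z \<in> K\<close> by simp
  moreover have "(signed b i, i) \<in> double_coset_rel"
    using double_coset_rel_sym signed_double_coset_rel [OF carrier(1)] by (rule symD)
  ultimately have "(j, i) \<in> double_coset_rel"
    by (blast intro: double_coset_rel_trans [THEN transD])
  then have ij: "i = j" using reps_unique i j by blast
  show ?thesis
  proof (cases "b' = b")
    case True
    let ?s = "signed b i"
    have "(?s \<otimes> a) \<otimes> (?s \<otimes> a) = z \<otimes> a"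
      using carrier ij True by (simp add: z_def m_assoc)
    then have "(?s \<otimes> a) \<otimes> (?s \<otimes> a) \<in> K" using a \<open>z \<in> K\<close> by simp
    moreover have "0 < L (?s \<otimes> a)"
      using i a indecomposable_signed by (simp add: L_mult_K_right indecomposable_def)
    ultimately show ?thesis using square_notin_K i a by simp
  next
    case False
    show ?thesis
    proof (cases b)
      case True
      then have "a = i \<otimes> z \<otimes> inv i"
        using False carrier ij by (simp add: z_def signed_def m_assoc)
      then have "a \<in> Cs i" using a \<open>z \<in> K\<close> by blast
      then show ?thesis using True False ij by simp
    next
      case b: False
      then have "a = inv i \<otimes> z \<otimes> i"
        using False carrier ij by (simp add: z_def signed_def m_assoc)
      then have "a \<in> Ds i" using a \<open>z \<in> K\<close> by blast
      then show ?thesis using b False ij by simp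
    qed
  qed
qed

lemma gromov2_no_pinch:
  assumes "i \<in> reps" "j \<in> reps" "a \<in> K" "\<not> pinch (j, b', a) (i, b, c)"
  shows "gromov2 (inv (signed b' j)) (a \<otimes> signed b i) = 0"
proof (rule ccontr)
  assume "gromov2 (inv (signed b' j)) (a \<otimes> signed b i) \<noteq> 0"
  then have "0 < gromov2 (inv (signed b' j)) (a \<otimes> signed b i)"
    using gromov2_nonneg assms by (simp add: order_less_le)
  then have "inv (inv (signed b' j)) \<otimes> (a \<otimes> signed b i) \<in> K"
    using assms by (intro mem_K_if_gromov2_pos indecomposable_inv indecomposable_mult_K_left
        indecomposable_signed)
  then have "signed b' j \<otimes> a \<otimes> signed b i \<in> K"
    using assms by (simp add: m_assoc)
  then show False
    using pinch_if_mem_K assms by blast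
qed

text \<open>In a reduced word the value starts with the first stable letter:
  the Gromov product is 0 at every junction, and hyperbolicity propagates this along the word.\<close>

lemma gromov2_reduced_word:
  assumes "reduced ((i, b, a) # ps)"
  shows "word_value (stable_word ((i, b, a) # ps)) \<in> H \<and>
    gromov2 (signed b i) (word_value (stable_word ((i, b, a) # ps))) = 2 * L (signed b i)"
  using assms
proof (induction ps arbitrary: i b a)
  case Nil
  then have "i \<in> reps" "a \<in> K" by auto
  then show ?case
    by (simp add: gromov2_def L_mult_K_right mem_K_iff m_assoc [symmetric])
next
  case (Cons y ps)
  obtain i' b' c where y: "y = (i', b', c)" by (cases y)
  let ?s0 = "signed b i" and ?s1 = "signed b' i'"
  let ?W = "word_value (stable_word ((i', b', c) # ps))"
  have red: "i \<in> reps" "a \<in> K" "\<not> pinch (i, b, a) (i', b', c)" "reduced ((i', b', c) # ps)"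
    using Cons.prems y by auto
  have "i' \<in> reps" using reduced_hd [OF red(4)] by simp
  have IH: "?W \<in> H" "gromov2 ?s1 ?W = 2 * L ?s1"
    using Cons.IH [OF red(4)] by auto
  have junction: "gromov2 (inv ?s0) (a \<otimes> ?s1) = 0"
    using gromov2_no_pinch [OF \<open>i' \<in> reps\<close> red(1-3)] .
  have H: "?s0 \<in> H" "?s1 \<in> H" "a \<in> H" "a \<otimes> ?s1 \<in> H" "a \<otimes> ?W \<in> H"
    using red(1,2) \<open>i' \<in> reps\<close> IH(1) by auto
  have eval: "word_value (stable_word ((i, b, a) # y # ps)) = ?s0 \<otimes> (a \<otimes> ?W)"
    using y red(1,2) by simp
  have "gromov2 (a \<otimes> ?s1) (a \<otimes> ?W) = 2 * L ?s1"
    using IH H red(2) by (simp add: gromov2_mult_K_left)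
  moreover have "0 < L ?s1"
    using \<open>i' \<in> reps\<close> indecomposable_signed by (simp add: indecomposable_def)
  moreover have "min (gromov2 (inv ?s0) (a \<otimes> ?W)) (gromov2 (a \<otimes> ?s1) (a \<otimes> ?W)) \<le> 0"
    using gromov2_hyperbolic [of "inv ?s0" "a \<otimes> ?s1" "a \<otimes> ?W"] junction H by simp
  ultimately have "gromov2 (inv ?s0) (a \<otimes> ?W) = 0"
    using gromov2_nonneg [of "inv ?s0" "a \<otimes> ?W"] H by simp
  then have "L (?s0 \<otimes> (a \<otimes> ?W)) = L ?s0 + L (a \<otimes> ?W)"
    using H by (simp add: gromov2_def L_inv)
  then show ?case
    using eval H by (simp add: gromov2_def)
qed

lemma word_value_reduced_ne_one:
  assumes "reduced ps" "ps \<noteq> []" "a0 \<in> K"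
  shows "word_value (Elem a0 # stable_word ps) \<noteq> \<one>"
proof
  assume one: "word_value (Elem a0 # stable_word ps) = \<one>"
  obtain i b a ps' where ps: "ps = (i, b, a) # ps'"
    using assms(2) by (cases ps) auto
  let ?s = "signed b i" and ?W = "word_value (stable_word ps)"
  have "?W \<in> H" "gromov2 ?s ?W = 2 * L ?s"
    using gromov2_reduced_word assms(1) ps by blast+
  moreover have "i \<in> reps" using reduced_hd assms(1) ps by auto
  then have "?s \<in> H" "0 < L ?s" using indecomposable_signed by (auto simp: indecomposable_def)
  ultimately have "0 < L ?W"
    using gromov2_le_twice_right [of ?s ?W] by simp
  moreover have "?W = inv a0"
  proof -
    have "?W = inv a0 \<otimes> (a0 \<otimes> ?W)"
      using assms(3) by simp
    also have "\<dots> = inv a0"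
      using one assms(3) by simp
    finally show ?thesis .
  qed
  ultimately show False using assms(3) by (simp add: mem_K_iff L_inv)
qed

lemma word_cong_if_word_value_eq:
  assumes u: "hnn_word K reps u" and v: "hnn_word K reps v" and eq: "word_value u = word_value v"
  shows "word_cong u v"
proof -
  obtain a0 ps where n: "a0 \<in> K" "reduced ps" "word_cong (u @ inv_word v) (Elem a0 # stable_word ps)"
    using normal_form [of "u @ inv_word v"] u hnn_word_inv_word [OF K_subgroup v] by auto
  have one: "word_value (Elem a0 # stable_word ps) = \<one>"
    using word_value_word_cong [OF n(3)] eq word_value_inv_word [OF v K.subset reps_subset_carrier] n(1)
    by (simp add: word_value_append)
  then have "ps = []"
    using word_value_reduced_ne_one n(1,2) by blast
  moreover from this have "a0 = \<one>"
    using one n(1) by simp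
  ultimately have "word_cong (u @ inv_word v) [Elem \<one>]"
    using n(3) by simp
  then have uv: "word_cong (u @ inv_word v) []"
    using hnn_cong.one by (rule hnn_cong.trans)
  have "word_cong (u @ []) (u @ (inv_word v @ v))"
    by (rule hnn_cong_append [OF hnn_cong.refl hnn_cong.sym [OF hnn_cong_inv_word [OF K_subgroup v]]])
  also have "word_cong \<dots> ([] @ v)"
    using hnn_cong_append [OF uv hnn_cong.refl [of _ _ _ _ _ v]] by simp
  finally show ?thesis by simp
qed

theorem hnn_presentation:
  "\<exists>I. I \<subseteq> H - K \<and>
     (\<forall>w. hnn_word K I w \<longrightarrow> word_eval G (\<lambda>x. x) w \<in> H) \<and>
     (\<forall>g\<in>H. \<exists>w. hnn_word K I w \<and> word_eval G (\<lambda>x. x) w = g) \<and>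
     (\<forall>u v. hnn_word K I u \<and> hnn_word K I v \<longrightarrow>
        (word_eval G (\<lambda>x. x) u = word_eval G (\<lambda>x. x) v \<longleftrightarrow>
         hnn_cong G K I Cs (\<lambda>i c. inv i \<otimes> c \<otimes> i) u v))"
proof (rule exI [of _ reps], intro conjI allI impI ballI)
  have eval: "word_eval G (\<lambda>x. x) w = word_value w" if "hnn_word K reps w" for w
    using that K.subset reps_subset_carrier by (rule word_eval_eq_word_value)
  show "reps \<subseteq> H - K"
  proof
    fix i assume "i \<in> reps"
    then have "0 < L i" using reps_indecomposable by (simp add: indecomposable_def)
    then show "i \<in> H - K" using \<open>i \<in> reps\<close> by (simp add: mem_K_iff)
  qed
  show "word_eval G (\<lambda>x. x) w \<in> H" if "hnn_word K reps w" for w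
    using that eval word_value_in_H by simp
  show "\<exists>w. hnn_word K reps w \<and> word_eval G (\<lambda>x. x) w = g" if g: "g \<in> H" for g
  proof -
    obtain w where "hnn_word K reps w" "word_value w = g"
      using word_value_surj [OF g] by blast
    then show ?thesis using eval [of w] by auto
  qed
  show "word_eval G (\<lambda>x. x) u = word_eval G (\<lambda>x. x) v \<longleftrightarrow> word_cong u v"
    if uv: "hnn_word K reps u \<and> hnn_word K reps v" for u v
  proof
    assume "word_eval G (\<lambda>x. x) u = word_eval G (\<lambda>x. x) v"
    then show "word_cong u v"
      using uv eval [of u] eval [of v] by (intro word_cong_if_word_value_eq) auto
  next
    assume "word_cong u v"
    then show "word_eval G (\<lambda>x. x) u = word_eval G (\<lambda>x. x) v"
      using uv eval [of u] eval [of v] word_value_word_cong by simp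
  qed
qed

end

section \<open>Vectors vanishing above a coordinate\<close>

definition vanishes_above :: "(nat \<Rightarrow> int) \<Rightarrow> nat \<Rightarrow> bool" where
  "vanishes_above v p \<longleftrightarrow> (\<forall>j>p. v j = 0)"

lemma vanishes_above_closed:
  "vanishes_above (\<lambda>_. 0) p"
  "vanishes_above a p \<Longrightarrow> vanishes_above b p \<Longrightarrow> vanishes_above (a + b) p"
  "vanishes_above a p \<Longrightarrow> vanishes_above b p \<Longrightarrow> vanishes_above (a - b) p"
  "vanishes_above a p \<Longrightarrow> vanishes_above (numeral m * a) p"
  by (auto simp: vanishes_above_def)

lemma vanishes_above_mono: "vanishes_above a q \<Longrightarrow> q \<le> p \<Longrightarrow> vanishes_above a p"
  by (simp add: vanishes_above_def)

lemma vanishes_above_rlex_min: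
  "vanishes_above a p \<Longrightarrow> vanishes_above b p \<Longrightarrow> vanishes_above (rlex_min a b) p"
  by (simp add: rlex_min_def)

lemma vanishes_above_Suc: "vanishes_above v p \<longleftrightarrow> vanishes_above v (Suc p) \<and> v (Suc p) = 0"
  by (auto simp: vanishes_above_def) (metis Suc_lessI)

lemma ht_le_iff_vanishes_above:
  assumes "v \<in> zvec n" shows "ht v \<le> p \<longleftrightarrow> vanishes_above v p"
proof (cases "v = (\<lambda>_. 0)")
  case True
  then show ?thesis by (simp add: ht_def vanishes_above_def)
next
  case False
  then obtain j0 where j0: "v j0 \<noteq> 0" by auto
  have bound: "\<And>j. v j \<noteq> 0 \<Longrightarrow> j \<le> n" using assms by (auto simp: zvec_def)
  have ht: "ht v = (GREATEST j. v j \<noteq> 0)" using False by (simp add: ht_def)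
  have "v (ht v) \<noteq> 0"
    unfolding ht by (rule GreatestI_nat [of _ j0 n]) (use j0 bound in auto)
  moreover have "\<And>j. v j \<noteq> 0 \<Longrightarrow> j \<le> ht v"
    unfolding ht by (rule Greatest_le_nat [of _ _ n]) (use bound in auto)
  ultimately show ?thesis
    unfolding vanishes_above_def by (meson leD le_less_trans not_le)
qed

lemma le_ht_if_nonzero: "v \<in> zvec n \<Longrightarrow> v j \<noteq> 0 \<Longrightarrow> j \<le> ht v"
  using ht_le_iff_vanishes_above [of v n "ht v"] by (metis le_refl not_le vanishes_above_def)

lemma zvec_diff:
  assumes "a \<in> zvec n" "b \<in> zvec n" shows "a - b \<in> zvec n"
  unfolding zvec_def
proof (intro CollectI allI impI)
  fix j assume "(a - b) j \<noteq> 0"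
  then have "a j \<noteq> 0 \<or> b j \<noteq> 0" by auto
  then show "j \<in> {1..n}" using assms by (auto simp: zvec_def)
qed

lemma rlex_le_imp_le_at:
  assumes "rlex_le a b" "vanishes_above a p" "vanishes_above b p" shows "a p \<le> b p"
proof (cases "a = b")
  case False
  then obtain j where "a j < b j" "\<forall>i>j. a i = b i"
    using assms(1) by (auto simp: rlex_le_def rlex_less_def)
  then show ?thesis
    using assms(2,3) by (cases j p rule: linorder_cases) (auto simp: vanishes_above_def)
qed simp

lemma vanishes_above_if_rlex_le:
  assumes "rlex_le (\<lambda>_. 0) a" "rlex_le a b" "vanishes_above b p" shows "vanishes_above a p"
proof (rule ccontr)
  assume "\<not> vanishes_above a p"
  then obtain j where j: "j > p" "a j \<noteq> 0" by (auto simp: vanishes_above_def)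
  then obtain j0 where j0: "0 < a j0" "\<forall>i>j0. a i = 0"
    using assms(1) by (auto simp: rlex_le_def rlex_less_def)
  then have "p < j0" using j by (meson le_less_trans not_le)
  show False
  proof (cases "a = b")
    case True
    then show False using j0 \<open>p < j0\<close> assms(3) by (auto simp: vanishes_above_def)
  next
    case False
    then obtain j1 where "a j1 < b j1" "\<forall>i>j1. a i = b i"
      using assms(2) by (auto simp: rlex_le_def rlex_less_def)
    then show False
      using j0 \<open>p < j0\<close> assms(3) by (cases j1 j0 rule: linorder_cases) (auto simp: vanishes_above_def)
  qed
qed

lemma rlex_le_add_nonneg: "rlex_le (\<lambda>_. 0) y \<Longrightarrow> rlex_le x (x + y)"
  unfolding rlex_le_def rlex_less_def by (auto simp: fun_eq_iff)

lemma rlex_min_at: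
  assumes "vanishes_above a p" "vanishes_above b p" shows "rlex_min a b p = min (a p) (b p)"
proof (cases "rlex_le a b")
  case True
  then show ?thesis using rlex_le_imp_le_at [OF True assms] by (simp add: rlex_min_def)
next
  case False
  then have "\<not> a p < b p"
    using assms by (auto simp: rlex_le_def rlex_less_def vanishes_above_def)
  then show ?thesis using False by (simp add: rlex_min_def)
qed

section \<open>The top coordinate of a \<open>\<int>\<^sup>n\<close>-valued length function\<close>

locale lex_length_function = group G for G :: "('g, 'b) monoid_scheme" (structure) +
  fixes n :: nat and l :: "'g \<Rightarrow> nat \<Rightarrow> int"
  assumes length_function: "length_function G n l"
begin

lemma l_zvec: "g \<in> carrier G \<Longrightarrow> l g \<in> zvec n"
  and l_one: "l \<one> = (\<lambda>_. 0)"
  and l_nonneg: "g \<in> carrier G \<Longrightarrow> rlex_le (\<lambda>_. 0) (l g)"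
  and l_inv: "g \<in> carrier G \<Longrightarrow> l (inv g) = l g"
  and l_mult: "g \<in> carrier G \<Longrightarrow> h \<in> carrier G \<Longrightarrow> rlex_le (l (g \<otimes> h)) (l g + l h)"
  using length_function by (simp_all add: length_function_def)

lemma mem_Gk_iff: "g \<in> Gk G l p \<longleftrightarrow> g \<in> carrier G \<and> vanishes_above (l g) p"
  unfolding Gk_def using ht_le_iff_vanishes_above l_zvec by blast

lemma vanishes_above_mult:
  assumes "g \<in> Gk G l p" "h \<in> Gk G l p" shows "vanishes_above (l (g \<otimes> h)) p"
  using assms vanishes_above_if_rlex_le [OF l_nonneg l_mult] by (simp add: mem_Gk_iff vanishes_above_closed)

lemma integer_length_top: "integer_length G (Gk G l p) (\<lambda>g. l g p)"
proof (intro integer_length.intro subgroup.intro integer_length_axioms.intro group_axioms)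
  show "Gk G l p \<subseteq> carrier G" by (auto simp: mem_Gk_iff)
  show "\<one> \<in> Gk G l p" by (simp add: mem_Gk_iff l_one vanishes_above_closed)
  show "l \<one> p = 0" by (simp add: l_one)
  fix g h assume g: "g \<in> Gk G l p"
  then show "inv g \<in> Gk G l p" "l (inv g) p = l g p" by (auto simp: mem_Gk_iff l_inv)
  show "0 \<le> l g p"
    using g rlex_le_imp_le_at [OF l_nonneg] by (simp add: mem_Gk_iff vanishes_above_closed)
  assume h: "h \<in> Gk G l p"
  then show "g \<otimes> h \<in> Gk G l p" using g vanishes_above_mult by (simp add: mem_Gk_iff)
  show "l (g \<otimes> h) p \<le> l g p + l h p"
    using g h rlex_le_imp_le_at [OF l_mult] vanishes_above_mult [OF g h]
    by (simp add: mem_Gk_iff vanishes_above_closed)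
qed

lemma Gk_eq_top_zero: "Gk G l p = {g \<in> Gk G l (Suc p). l g (Suc p) = 0}"
  by (auto simp: mem_Gk_iff vanishes_above_Suc [of _ p])

lemma inv_mem_Gk: "g \<in> Gk G l p \<Longrightarrow> inv g \<in> Gk G l p"
  by (simp add: mem_Gk_iff l_inv)

lemma summands_mem_Gk:
  assumes "g \<in> Gk G l p" "x \<in> carrier G" "y \<in> carrier G" "l g = l x + l y"
  shows "x \<in> Gk G l p" "y \<in> Gk G l p"
proof -
  have "rlex_le (l x) (l g)" "rlex_le (l y) (l g)"
    using assms(4) rlex_le_add_nonneg [OF l_nonneg [OF assms(3)], of "l x"]
      rlex_le_add_nonneg [OF l_nonneg [OF assms(2)], of "l y"] by (simp_all add: add.commute)
  then show "x \<in> Gk G l p" "y \<in> Gk G l p"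
    using assms(1-3) vanishes_above_if_rlex_le [OF l_nonneg] by (auto simp: mem_Gk_iff)
qed

text \<open>Since \<open>\<delta>\<close> has height 1, the defect \<open>2\<delta>\<close> of hyperbolicity is invisible in coordinate \<open>p \<ge> 2\<close>.\<close>

lemma top_hyperbolic:
  assumes hyperbolic: "hyperbolic G l \<delta>" and \<delta>: "vanishes_above \<delta> 1" and p: "2 \<le> p"
    and fgh: "f \<in> Gk G l p" "g \<in> Gk G l p" "h \<in> Gk G l p"
  shows "min (gprod2 G l f h p) (gprod2 G l g h p) \<le> gprod2 G l f g p"
proof -
  have gp: "vanishes_above (gprod2 G l x y) p" if "x \<in> Gk G l p" "y \<in> Gk G l p" for x y
    using that vanishes_above_mult [OF inv_mem_Gk] by (simp add: gprod2_def mem_Gk_iff l_inv vanishes_above_closed)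
  have "vanishes_above (2 * \<delta>) p" "\<delta> p = 0"
    using \<delta> p vanishes_above_mono [OF \<delta>, of p] by (auto simp: vanishes_above_closed vanishes_above_def)
  then have "vanishes_above (rlex_min (gprod2 G l f h) (gprod2 G l g h) - 2 * \<delta>) p"
    using gp fgh by (intro vanishes_above_closed(3) vanishes_above_rlex_min)
  moreover have "rlex_le (rlex_min (gprod2 G l f h) (gprod2 G l g h) - 2 * \<delta>) (gprod2 G l f g)"
    using hyperbolic fgh by (simp add: hyperbolic_def mem_Gk_iff)
  ultimately have "(rlex_min (gprod2 G l f h) (gprod2 G l g h) - 2 * \<delta>) p \<le> gprod2 G l f g p"
    using rlex_le_imp_le_at gp fgh by blast
  then show ?thesis
    using \<open>\<delta> p = 0\<close> rlex_min_at [OF gp gp] fgh by simp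
qed

lemma top_square_notin_Gk:
  assumes squares: "\<And>g. g \<in> carrier G \<Longrightarrow> rlex_less (l (g \<otimes> g)) (l g) \<Longrightarrow> ht (l g - l (g \<otimes> g)) = 1"
    and p: "1 \<le> p" and g: "g \<in> Gk G l (Suc p)" and pos: "0 < l g (Suc p)"
  shows "g \<otimes> g \<notin> Gk G l p"
proof
  assume gg: "g \<otimes> g \<in> Gk G l p"
  have vanish: "vanishes_above (l (g \<otimes> g)) p" "vanishes_above (l g) (Suc p)"
    using g gg by (auto simp: mem_Gk_iff)
  have "rlex_less (l (g \<otimes> g)) (l g)"
    unfolding rlex_less_def
  proof (intro exI conjI allI impI)
    show "l (g \<otimes> g) (Suc p) < l g (Suc p)" using vanish pos by (simp add: vanishes_above_def)
    show "l (g \<otimes> g) i = l g i" if "Suc p < i" for i using that vanish by (simp add: vanishes_above_def)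
  qed
  then have "ht (l g - l (g \<otimes> g)) = 1" using g by (intro squares) (simp_all add: mem_Gk_iff)
  moreover have "Suc p \<le> ht (l g - l (g \<otimes> g))"
    using g gg vanish pos by (intro le_ht_if_nonzero [OF zvec_diff [OF l_zvec l_zvec]])
      (auto simp: mem_Gk_iff vanishes_above_def)
  ultimately show False using p by simp
qed

lemma top_regular:
  assumes regular: "regular G l \<delta>" and \<delta>: "vanishes_above \<delta> 1" and p: "1 \<le> p"
    and gh: "g \<in> Gk G l (Suc p)" "h \<in> Gk G l (Suc p)"
  shows "\<exists>gc gd hc hd. gc \<in> Gk G l (Suc p) \<and> gd \<in> Gk G l (Suc p) \<and>
      hc \<in> Gk G l (Suc p) \<and> hd \<in> Gk G l (Suc p) \<and> g = gc \<otimes> gd \<and> h = hc \<otimes> hd \<and>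
      l g (Suc p) = l gc (Suc p) + l gd (Suc p) \<and> l h (Suc p) = l hc (Suc p) + l hd (Suc p) \<and>
      2 * l gc (Suc p) = gprod2 G l g h (Suc p) \<and> l hc (Suc p) = l gc (Suc p) \<and>
      inv gc \<otimes> hc \<in> Gk G l p"
proof -
  have "g \<in> carrier G" "h \<in> carrier G" using gh by (simp_all add: mem_Gk_iff)
  from regular [unfolded regular_def, rule_format, OF this]
  obtain gc hc gd hd where c: "gc \<in> carrier G" "hc \<in> carrier G" "gd \<in> carrier G" "hd \<in> carrier G"
    and e: "2 * l gc = gprod2 G l g h" "l hc = l gc" "g = gc \<otimes> gd" "h = hc \<otimes> hd"
      "l g = l gc + l gd" "l h = l hc + l hd" "rlex_le (l (inv gc \<otimes> hc)) (4 * \<delta>)"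
    by blast
  have "vanishes_above (l (inv gc \<otimes> hc)) 1"
    using vanishes_above_if_rlex_le [OF l_nonneg e(7) vanishes_above_closed(4) [OF \<delta>]] c by simp
  then have "vanishes_above (l (inv gc \<otimes> hc)) p"
    using p by (rule vanishes_above_mono)
  then have "inv gc \<otimes> hc \<in> Gk G l p"
    unfolding mem_Gk_iff using c by blast
  moreover have "gc \<in> Gk G l (Suc p)" "gd \<in> Gk G l (Suc p)" "hc \<in> Gk G l (Suc p)" "hd \<in> Gk G l (Suc p)"
    using summands_mem_Gk [OF gh(1) c(1,3) e(5)] summands_mem_Gk [OF gh(2) c(2,4) e(6)] by auto
  moreover have "2 * l gc (Suc p) = gprod2 G l g h (Suc p)" "l hc (Suc p) = l gc (Suc p)"
    "l g (Suc p) = l gc (Suc p) + l gd (Suc p)" "l h (Suc p) = l hc (Suc p) + l hd (Suc p)"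
    using fun_cong [OF e(1), of "Suc p"] e(2,5,6) by simp_all
  ultimately show ?thesis
    using e(3,4) by (intro exI [of _ gc] exI [of _ gd] exI [of _ hc] exI [of _ hd]) simp
qed

lemma regular_tree_length_top:
  assumes hyperbolic: "hyperbolic G l \<delta>" and regular: "regular G l \<delta>"
    and \<delta>: "\<delta> \<in> zvec n" "ht \<delta> = 1"
    and squares: "\<And>g. g \<in> carrier G \<Longrightarrow> rlex_less (l (g \<otimes> g)) (l g) \<Longrightarrow> ht (l g - l (g \<otimes> g)) = 1"
    and p: "1 \<le> p"
  shows "regular_tree_length G (Gk G l (Suc p)) (\<lambda>g. l g (Suc p))"
proof -
  interpret integer_length G "Gk G l (Suc p)" "\<lambda>g. l g (Suc p)"
    by (rule integer_length_top)
  have K: "K = Gk G l p"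
    unfolding K_def by (rule Gk_eq_top_zero [symmetric])
  have gromov2: "gromov2 x y = gprod2 G l x y (Suc p)" for x y
    by (simp add: gromov2_def gprod2_def)
  have \<delta>1: "vanishes_above \<delta> 1"
    using ht_le_iff_vanishes_above [OF \<delta>(1), of 1] \<delta>(2) by simp
  have "min (gromov2 f h) (gromov2 g h) \<le> gromov2 f g"
    if "f \<in> Gk G l (Suc p)" "g \<in> Gk G l (Suc p)" "h \<in> Gk G l (Suc p)" for f g h
    using top_hyperbolic [OF hyperbolic \<delta>1 _ that] p by (simp add: gromov2)
  moreover have "g \<otimes> g \<notin> K" if "g \<in> Gk G l (Suc p)" "0 < l g (Suc p)" for g
    unfolding K using squares p that by (rule top_square_notin_Gk)
  moreover have "\<exists>gc gd hc hd. gc \<in> Gk G l (Suc p) \<and> gd \<in> Gk G l (Suc p) \<and>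
      hc \<in> Gk G l (Suc p) \<and> hd \<in> Gk G l (Suc p) \<and> g = gc \<otimes> gd \<and> h = hc \<otimes> hd \<and>
      l g (Suc p) = l gc (Suc p) + l gd (Suc p) \<and> l h (Suc p) = l hc (Suc p) + l hd (Suc p) \<and>
      2 * l gc (Suc p) = gromov2 g h \<and> l hc (Suc p) = l gc (Suc p) \<and> inv gc \<otimes> hc \<in> K"
    if "g \<in> Gk G l (Suc p)" "h \<in> Gk G l (Suc p)" for g h
    unfolding K gromov2 using regular \<delta>1 p that by (rule top_regular)
  ultimately show ?thesis
    by unfold_locales
qed

end

theorem proposition3p5:
  fixes G :: "('g, 'b) monoid_scheme" and n :: nat
    and l :: "'g \<Rightarrow> nat \<Rightarrow> int" and \<delta> :: "nat \<Rightarrow> int"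
  assumes "group G"
    and "torsion_free G"
    and "\<delta> \<in> zvec n" and "rlex_le (\<lambda>_. 0) \<delta>"
    and "length_function G n l"
    and "hyperbolic G l \<delta>"
    and "regular G l \<delta>"
    and A: "ht \<delta> = 1"
    and B: "\<forall>g\<in>carrier G. \<forall>m::int. m \<noteq> 0 \<and> rlex_less (l (g [^]\<^bsub>G\<^esub> m)) (l g)
              \<longrightarrow> ht (l g - l (g [^]\<^bsub>G\<^esub> m)) = 1"
    and C: "\<forall>g\<in>carrier G. g \<noteq> \<one>\<^bsub>G\<^esub> \<longrightarrow> rlex_less (\<lambda>_. 0) (l g)"
    and k: "1 \<le> k" "k < n"
  shows "\<exists>(I :: 'g set) (h :: 'g \<Rightarrow> 'g).
     h ` I \<subseteq> Gk G l (Suc k) - Gk G l k \<and>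
     (let Cs = (\<lambda>i. Gk G l k \<inter> {h i \<otimes>\<^bsub>G\<^esub> x \<otimes>\<^bsub>G\<^esub> inv\<^bsub>G\<^esub> (h i) | x. x \<in> Gk G l k});
          phi = (\<lambda>i c. inv\<^bsub>G\<^esub> (h i) \<otimes>\<^bsub>G\<^esub> c \<otimes>\<^bsub>G\<^esub> h i)
      in (\<forall>w. hnn_word (Gk G l k) I w \<longrightarrow> word_eval G h w \<in> Gk G l (Suc k)) \<and>
         (\<forall>g\<in>Gk G l (Suc k). \<exists>w. hnn_word (Gk G l k) I w \<and> word_eval G h w = g) \<and>
         (\<forall>u v. hnn_word (Gk G l k) I u \<and> hnn_word (Gk G l k) I v \<longrightarrow>
              (word_eval G h u = word_eval G h v \<longleftrightarrow> hnn_cong G (Gk G l k) I Cs phi u v)))"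
proof -
  interpret lex_length_function G n l
    by (intro lex_length_function.intro lex_length_function_axioms.intro) fact+
  have squares: "ht (l g - l (g \<otimes>\<^bsub>G\<^esub> g)) = 1"
    if "g \<in> carrier G" "rlex_less (l (g \<otimes>\<^bsub>G\<^esub> g)) (l g)" for g
  proof -
    have "g [^]\<^bsub>G\<^esub> (2::int) = g \<otimes>\<^bsub>G\<^esub> g"
      using int_pow_int [of G g 2] that(1) by (simp add: numeral_2_eq_2)
    then show ?thesis using B that by (metis zero_neq_numeral)
  qed
  interpret top: regular_tree_length G "Gk G l (Suc k)" "\<lambda>g. l g (Suc k)"
    using regular_tree_length_top [OF \<open>hyperbolic G l \<delta>\<close> \<open>regular G l \<delta>\<close> \<open>\<delta> \<in> zvec n\<close> A squares k(1)] .
  have "top.K = Gk G l k"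
    unfolding top.K_def by (rule Gk_eq_top_zero [symmetric])
  then obtain I where "I \<subseteq> Gk G l (Suc k) - Gk G l k"
    "\<forall>w. hnn_word (Gk G l k) I w \<longrightarrow> word_eval G (\<lambda>x. x) w \<in> Gk G l (Suc k)"
    "\<forall>g\<in>Gk G l (Suc k). \<exists>w. hnn_word (Gk G l k) I w \<and> word_eval G (\<lambda>x. x) w = g"
    "\<forall>u v. hnn_word (Gk G l k) I u \<and> hnn_word (Gk G l k) I v \<longrightarrow>
       (word_eval G (\<lambda>x. x) u = word_eval G (\<lambda>x. x) v \<longleftrightarrow>
        hnn_cong G (Gk G l k) I top.Cs (\<lambda>i c. inv\<^bsub>G\<^esub> i \<otimes>\<^bsub>G\<^esub> c \<otimes>\<^bsub>G\<^esub> i) u v)"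
    using top.hnn_presentation by auto
  then show ?thesis
    unfolding \<open>top.K = Gk G l k\<close> Let_def by (intro exI [of _ I] exI [of _ "\<lambda>x. x"]) simp
qed

end
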